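(* Let $b>0$. Then there exists $g\in\tilde{\mathcal S}\cap\mathcal H^2_-$ such that the function $s\mapsto e^{i\sqrt{s}\,b}g(s)$ does not belong to $\tilde{\mathcal S}\cap\mathcal H^2_-$, where the branch of $\sqrt{s}$ is taken with $-\pi\leq\operatorname{Arg}s<\pi$.
   Context: Hardy classes: a complex function $f$ analytic in the open lower half-plane $\mathbb C_-$ belongs to $\mathcal H^2_-$ if $x\mapsto f(x+iy)$ is square integrable for every $y<0$ and $\sup_{y<0}\int_{-\infty}^{\infty}|f(x+iy)|^2\,dx<\infty$ (equivalently, $\sup_{-\pi<\phi<0}\int_0^\infty|f(re^{i\phi})|^2dr<\infty$); $\mathcal H^2_+$ is defined analogously with the open upper half-plane. Such functions are identified with their pointwise boundary values on the real axis. The space $\tilde{\mathcal S}$ is the space of $C^\infty$ functions $f$ on $\mathbb R$ such that for every $N=0,1,2,\dots$, $$\|f\|_N=\sup_{s\in\mathbb R}\sup_{n\le N}\Big(|s|+\frac{1}{|s|}\Big)^N\Big|\frac{d^nf(s)}{ds^n}\Big|<\infty$$ (Schwartz functions vanishing at $0$ faster than any polynomial). $\tilde{\mathcal S}\cap\mathcal H^2_-$ denotes the functions in $\mathcal H^2_-$ whose boundary values on $\mathbb R$ lie in $\tilde{\mathcal S}$. *)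

theory Defs
  imports "HOL-Analysis.Analysis"
begin

definition derivs_of :: "(real \<Rightarrow> complex) \<Rightarrow> (nat \<Rightarrow> real \<Rightarrow> complex) \<Rightarrow> bool" where
  "derivs_of f D \<longleftrightarrow> D 0 = f \<and>
     (\<forall>n x. (D n has_vector_derivative D (Suc n) x) (at x))"

text \<open>The space S-tilde: C-infinity functions with all seminorms
  sup_s sup_(n<=N) (|s| + 1/|s|)^N |f^(n)(s)| finite.
  (At s = 0 the Isabelle value of |s| + 1/|s| is 0; the bound there is vacuous,
  and vanishing at 0 follows from continuity of the derivatives.)\<close>
definition S_tilde :: "(real \<Rightarrow> complex) set" where
  "S_tilde = {f. \<exists>D. derivs_of f D \<and>
     (\<forall>N::nat. \<exists>C::real. \<forall>s::real. \<forall>n\<le>N.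
        (\<bar>s\<bar> + 1 / \<bar>s\<bar>) ^ N * norm (D n s) \<le> C)}"

definition H2_lower :: "(complex \<Rightarrow> complex) set" where
  "H2_lower = {F. F holomorphic_on {z. Im z < 0} \<and>
     (\<forall>y<0. integrable lborel (\<lambda>x. (norm (F (Complex x y)))\<^sup>2)) \<and>
     (\<exists>M. \<forall>y<0. integral\<^sup>L lborel (\<lambda>x. (norm (F (Complex x y)))\<^sup>2) \<le> M)}"

text \<open>A function on the real line belongs to S-tilde intersected with H^2_-
  if it lies in S-tilde and it is the (a.e. pointwise, vertical) boundary value
  of some function in H^2_-.\<close>
definition S_tilde_H2_lower :: "(real \<Rightarrow> complex) set" where
  "S_tilde_H2_lower = {g. g \<in> S_tilde \<and>
     (\<exists>F \<in> H2_lower. AE x in lborel.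
        ((\<lambda>y. F (Complex x y)) \<longlongrightarrow> g x) (at_left 0))}"

text \<open>Square root on the real line with branch -pi <= Arg s < pi:
  for s < 0, Arg s = -pi, so sqrt s = sqrt|s| * exp(-i pi/2) = -i sqrt|s|.\<close>
definition sqrt_br :: "real \<Rightarrow> complex" where
  "sqrt_br s = (if s \<ge> 0 then complex_of_real (sqrt s)
                else - \<i> * complex_of_real (sqrt (- s)))"

end

theory Submission
  imports Defs "HOL-Complex_Analysis.Complex_Analysis" "HOL-Probability.Sinc_Integral"
begin

text \<open>Take \<open>a = b / 2\<close> and \<open>g(z) = exp (-a (w + 1/w))\<close> with \<open>w = sqrt (i z)\<close>. This is
  holomorphic off the closed sector \<open>\<pi>/6 \<le> arg z \<le> 5\<pi>/6\<close>, a neighbourhood of the closed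
  lower half-plane minus 0, and there \<open>Re w \<ge> |w|/2\<close>, so \<open>|g(z)| \<le> exp (-a/2 (r + 1/r))\<close>
  with \<open>r = sqrt |z|\<close>. Cauchy's estimates on discs of radius \<open>|s|/4\<close> give the same kind of
  decay for every derivative on the real line, and since \<open>exp (-c (r + 1/r))\<close> beats every
  power of \<open>|s| + 1/|s|\<close>, \<open>g\<close> lies in \<open>S\<close>-tilde and in \<open>H\<^sup>2\<close> of the lower half-plane.
  On the other hand \<open>|g(s)| \<ge> exp (-a (r + 1/r))\<close>, while for \<open>s < 0\<close> the factor
  \<open>exp (i sqrt(s) b)\<close> equals \<open>exp (b r)\<close>; with \<open>a = b/2\<close> the product grows like
  \<open>exp (b r / 2)\<close>, so it is not even bounded.\<close>

lemma power_mult_exp_neg_le: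
  fixes y c :: real
  assumes "y \<ge> 0" "c > 0"
  shows "y ^ k * exp (- (c * y)) \<le> (real k / c) ^ k"
proof (cases "k = 0")
  case True
  then show ?thesis using assms by simp
next
  case False
  have "exp (c * y) = exp (c * y / real k) ^ k"
    using False by (simp add: exp_of_nat_mult[symmetric])
  also have "\<dots> \<ge> (c * y / real k) ^ k"
    using assms by (intro power_mono) (auto intro: order_trans[OF _ exp_ge_add_one_self])
  finally have exp_ge: "(c * y / real k) ^ k \<le> exp (c * y)" .
  have "y ^ k = (real k / c) ^ k * (c * y / real k) ^ k"
    using False assms by (simp flip: power_mult_distrib)
  also have "\<dots> \<le> (real k / c) ^ k * exp (c * y)"
    using exp_ge assms by (intro mult_left_mono) auto
  finally show ?thesis by (simp add: exp_minus field_simps)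
qed

lemma weighted_exp_sqrt_bounded:
  fixes c :: real
  assumes "c > 0"
  shows "\<exists>K. \<forall>t>0. (t + 1 / t) ^ N * (1 / t) ^ n * exp (- (c * (sqrt t + 1 / sqrt t))) \<le> K"
proof -
  define k where "k = 2 * N + 2 * n"
  have "(t + 1 / t) ^ N * (1 / t) ^ n * exp (- (c * (sqrt t + 1 / sqrt t))) \<le> (real k / c) ^ k"
    if "t > 0" for t
  proof -
    define r where "r = sqrt t"
    define y where "y = r + 1 / r"
    have r: "r > 0" "r\<^sup>2 = t" using that by (simp_all add: r_def)
    have y2: "y\<^sup>2 = t + 2 + 1 / t"
      using r that by (simp add: y_def power2_eq_square field_simps)
    have "(t + 1 / t) ^ N * (1 / t) ^ n \<le> (y\<^sup>2) ^ N * (y\<^sup>2) ^ n"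
      using that y2 by (intro mult_mono power_mono) auto
    also have "\<dots> = y ^ k" by (simp add: k_def power_add power_mult)
    finally have "(t + 1 / t) ^ N * (1 / t) ^ n * exp (- (c * y)) \<le> y ^ k * exp (- (c * y))"
      by (intro mult_right_mono) auto
    also have "\<dots> \<le> (real k / c) ^ k"
      using r assms by (intro power_mult_exp_neg_le) (auto simp: y_def)
    finally show ?thesis by (simp add: y_def r_def)
  qed
  then show ?thesis by blast
qed

lemma add_inverse_le_twice:
  fixes r \<rho> :: real
  assumes "r / 2 \<le> \<rho>" "\<rho> \<le> 2 * r" "\<rho> > 0"
  shows "r + 1 / r \<le> 2 * (\<rho> + 1 / \<rho>)"
proof -
  have "r > 0" using assms by linarith
  then have "1 / r \<le> 2 / \<rho>" using assms by (simp add: field_simps)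
  then show ?thesis using assms(1) by simp
qed

lemma S_tilde_bounded:
  assumes "f \<in> S_tilde"
  obtains C where "\<And>s. norm (f s) \<le> C"
proof -
  from assms obtain D C where "derivs_of f D" "\<And>s. \<forall>n\<le>0. (\<bar>s\<bar> + 1 / \<bar>s\<bar>) ^ 0 * norm (D n s) \<le> C"
    unfolding S_tilde_def by blast
  then have "\<And>s. norm (f s) \<le> C" unfolding derivs_of_def by simp
  then show ?thesis by (rule that)
qed

lemma S_tilde_memI:
  assumes "derivs_of f D"
    and "\<And>N n. \<exists>C. \<forall>s. (\<bar>s\<bar> + 1 / \<bar>s\<bar>) ^ N * norm (D n s) \<le> C"
  shows "f \<in> S_tilde"
proof -
  have "\<exists>C. \<forall>s. \<forall>n\<le>N. (\<bar>s\<bar> + 1 / \<bar>s\<bar>) ^ N * norm (D n s) \<le> C" for N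
  proof -
    from assms(2) obtain C where C: "\<And>n s. (\<bar>s\<bar> + 1 / \<bar>s\<bar>) ^ N * norm (D n s) \<le> C n"
      by metis
    have "0 \<le> C m" for m
      by (rule order_trans[OF _ C[of 0 m]]) simp
    then have "C n \<le> (\<Sum>m\<le>N. C m)" if "n \<le> N" for n
      using that by (intro member_le_sum) auto
    then show ?thesis using C by (meson order_trans)
  qed
  then show ?thesis unfolding S_tilde_def using assms(1) by blast
qed

lemma quadratic_bound_if_weighted_bound:
  fixes h :: "real \<Rightarrow> 'a::real_normed_vector"
  assumes "\<And>s. (\<bar>s\<bar> + 1 / \<bar>s\<bar>)\<^sup>2 * norm (h s) \<le> C" and "h 0 = 0"
  shows "norm (h s) \<le> C * s\<^sup>2"
proof (cases "s = 0")
  case True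
  then show ?thesis using assms(2) by simp
next
  case False
  have "1 / s\<^sup>2 \<le> (\<bar>s\<bar> + 1 / \<bar>s\<bar>)\<^sup>2"
    using power_mono[of "1 / \<bar>s\<bar>" "\<bar>s\<bar> + 1 / \<bar>s\<bar>" 2] by (simp add: power_divide)
  then have "1 / s\<^sup>2 * norm (h s) \<le> C"
    using assms(1)[of s] by (meson mult_right_mono norm_ge_zero order_trans)
  then show ?thesis using False by (simp add: field_simps)
qed

lemma has_vector_derivative_zero_if_quadratic_bound:
  fixes h :: "real \<Rightarrow> 'a::real_normed_vector"
  assumes "\<And>y. norm (h y) \<le> C * y\<^sup>2"
  shows "(h has_vector_derivative 0) (at 0)"
proof -
  have h0: "h 0 = 0" using assms[of 0] by simp
  have bound: "norm ((h y - h 0 - y *\<^sub>R 0) /\<^sub>R norm (y - 0)) \<le> C * \<bar>y\<bar>" for y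
  proof (cases "y = 0")
    case False
    have "norm (h y) \<le> (C * \<bar>y\<bar>) * \<bar>y\<bar>"
      using assms[of y] by (simp add: power2_eq_square abs_mult_self_eq mult.assoc)
    then have "norm (h y) / \<bar>y\<bar> \<le> C * \<bar>y\<bar>" using False by (simp add: pos_divide_le_eq)
    then show ?thesis by (simp add: h0 divide_inverse mult.commute)
  qed (simp add: h0)
  have lim: "((\<lambda>y. C * \<bar>y\<bar>) \<longlongrightarrow> 0) (at 0)"
    by (intro tendsto_mult_right_zero tendsto_rabs_zero tendsto_ident_at)
  have "((\<lambda>y. (h y - h 0 - y *\<^sub>R 0) /\<^sub>R norm (y - 0)) \<longlongrightarrow> 0) (at 0)"
    using bound by (intro Lim_null_comparison[OF always_eventually lim]) blast
  then show ?thesis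
    by (simp add: has_vector_derivative_def has_derivative_at_within bounded_linear_scaleR_left)
qed

lemma H2_lowerI:
  assumes hol: "F holomorphic_on {z. Im z < 0}"
    and bound: "\<And>z. Im z < 0 \<Longrightarrow> (norm (F z))\<^sup>2 \<le> K / (1 + (Re z)\<^sup>2)"
  shows "F \<in> H2_lower"
proof -
  have "integrable lborel (\<lambda>x::real. inverse (1 + x\<^sup>2))"
    using integrable_inverse_1_plus_square by (simp add: set_integrable_def einterval_def)
  then have int_bound: "integrable lborel (\<lambda>x::real. K / (1 + x\<^sup>2))"
    by (simp add: divide_inverse)
  have line_bound: "(norm (F (Complex x y)))\<^sup>2 \<le> K / (1 + x\<^sup>2)" if "y < 0" for x y
    using bound[of "Complex x y"] that by simp
  have int: "integrable lborel (\<lambda>x. (norm (F (Complex x y)))\<^sup>2)" if "y < 0" for y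
  proof (rule Bochner_Integration.integrable_bound[OF int_bound])
    have "continuous_on UNIV (\<lambda>x. F (Complex x y))"
      unfolding Complex_eq using that
      by (intro continuous_on_compose2[OF holomorphic_on_imp_continuous_on[OF hol]]
          continuous_intros) auto
    then have "continuous_on UNIV (\<lambda>x. (norm (F (Complex x y)))\<^sup>2)"
      by (intro continuous_intros)
    then show "(\<lambda>x. (norm (F (Complex x y)))\<^sup>2) \<in> borel_measurable lborel"
      by (simp add: borel_measurable_continuous_onI)
    show "AE x in lborel. norm ((norm (F (Complex x y)))\<^sup>2) \<le> norm (K / (1 + x\<^sup>2))"
      using line_bound[OF that]
      by (intro AE_I2) (auto intro: order_trans[OF _ divide_right_mono[OF abs_ge_self]])
  qed
  have "integral\<^sup>L lborel (\<lambda>x. (norm (F (Complex x y)))\<^sup>2) \<le> integral\<^sup>L lborel (\<lambda>x. K / (1 + x\<^sup>2))"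
    if "y < 0" for y
    using int[OF that] int_bound line_bound[OF that] by (intro integral_mono) auto
  then show ?thesis unfolding H2_lower_def using hol int by blast
qed

lemma AE_boundary_limit_lower:
  assumes "\<And>x. x \<noteq> 0 \<Longrightarrow> isCont F (of_real x)"
    and "\<And>x. x \<noteq> 0 \<Longrightarrow> g x = F (of_real x)"
  shows "AE x in lborel. ((\<lambda>y. F (Complex x y)) \<longlongrightarrow> g x) (at_left 0)"
  using AE_lborel_singleton[of 0]
proof eventually_elim
  case (elim x)
  have "((\<lambda>y. of_real x + \<i> * of_real y) \<longlongrightarrow> of_real x + \<i> * of_real 0) (at_left (0::real))"
    by (intro tendsto_intros)
  then have "((\<lambda>y. F (of_real x + \<i> * of_real y)) \<longlongrightarrow> F (of_real x)) (at_left 0)"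
    using assms(1)[OF elim] isCont_tendsto_compose by fastforce
  then show ?case using assms(2)[OF elim] by (simp add: Complex_eq)
qed

lemma Re_csqrt_ge:
  assumes "Re u \<ge> - cmod u / 2"
  shows "Re (csqrt u) \<ge> sqrt (cmod u) / 2"
proof -
  have "sqrt (cmod u) / 2 = sqrt (cmod u / 4)" by (simp add: real_sqrt_divide)
  also have "\<dots> \<le> sqrt ((cmod u + Re u) / 2)" using assms by (intro real_sqrt_le_mono) auto
  finally show ?thesis by simp
qed

lemma Re_add_inverse: "Re (w + 1 / w) = Re w * (1 + 1 / (cmod w)\<^sup>2)"
  by (simp add: Re_divide cmod_power2 algebra_simps)

definition outside_cone :: "complex set" where
  "outside_cone = {z. Im z < cmod z / 2}"

lemma open_outside_cone: "open outside_cone"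
  unfolding outside_cone_def by (intro open_Collect_less continuous_intros) auto

lemma outside_cone_nonzero: "z \<in> outside_cone \<Longrightarrow> z \<noteq> 0"
  by (auto simp: outside_cone_def)

lemma lower_halfplane_subset_outside_cone:
  assumes "Im z \<le> 0" "z \<noteq> 0"
  shows "z \<in> outside_cone"
proof -
  have "cmod z > 0" using assms(2) by simp
  with assms(1) have "Im z < cmod z / 2" by linarith
  then show ?thesis by (simp add: outside_cone_def)
qed

lemma mult_i_outside_cone_notin_nonpos_Reals:
  assumes "z \<in> outside_cone"
  shows "\<i> * z \<notin> \<real>\<^sub>\<le>\<^sub>0"
proof
  assume "\<i> * z \<in> \<real>\<^sub>\<le>\<^sub>0"
  then obtain t where t: "t \<le> 0" "\<i> * z = of_real t" by (auto elim: nonpos_Reals_cases)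
  have "z = - \<i> * (\<i> * z)" by (simp flip: mult.assoc)
  then have "z = - \<i> * of_real t" using t by simp
  then show False using assms t by (simp add: outside_cone_def norm_mult)
qed

lemma cball_subset_outside_cone:
  assumes "s \<noteq> 0"
  shows "cball (complex_of_real s) (\<bar>s\<bar> / 4) \<subseteq> outside_cone"
proof
  fix z assume "z \<in> cball (complex_of_real s) (\<bar>s\<bar> / 4)"
  then have d: "cmod (z - of_real s) \<le> \<bar>s\<bar> / 4" by (simp add: dist_norm norm_minus_commute)
  have "Im z \<le> \<bar>Im (z - of_real s)\<bar>" by simp
  also have "\<dots> \<le> \<bar>s\<bar> / 4" using abs_Im_le_cmod d by (rule order_trans)
  finally have "Im z \<le> \<bar>s\<bar> / 4" .
  moreover have "\<bar>s\<bar> \<le> cmod z + cmod (z - of_real s)"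
    using norm_triangle_sub[of "of_real s" z] by (simp add: norm_minus_commute)
  ultimately show "z \<in> outside_cone" using assms d by (simp add: outside_cone_def)
qed

definition joukowski_exp :: "real \<Rightarrow> complex \<Rightarrow> complex" where
  "joukowski_exp a z = exp (- (of_real a * (csqrt (\<i> * z) + 1 / csqrt (\<i> * z))))"

lemma holomorphic_joukowski_exp: "joukowski_exp a holomorphic_on outside_cone"
  unfolding joukowski_exp_def
  by (intro holomorphic_intros)
     (auto dest: mult_i_outside_cone_notin_nonpos_Reals outside_cone_nonzero)

lemma norm_joukowski_exp:
  "norm (joukowski_exp a z) = exp (- (a * Re (csqrt (\<i> * z) + 1 / csqrt (\<i> * z))))"
  unfolding joukowski_exp_def norm_exp_eq_Re by simp

lemma norm_joukowski_exp_le: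
  assumes "a \<ge> 0" "z \<in> outside_cone"
  shows "norm (joukowski_exp a z) \<le> exp (- (a / 2 * (sqrt (cmod z) + 1 / sqrt (cmod z))))"
proof -
  define w where "w = csqrt (\<i> * z)"
  have norm_w: "cmod w = sqrt (cmod z)" by (simp add: w_def norm_mult)
  have "cmod w > 0" using outside_cone_nonzero[OF assms(2)] by (simp add: norm_w)
  have "Re (\<i> * z) \<ge> - cmod (\<i> * z) / 2"
    using assms(2) by (simp add: outside_cone_def norm_mult)
  then have "Re w \<ge> sqrt (cmod (\<i> * z)) / 2"
    unfolding w_def by (rule Re_csqrt_ge)
  then have "Re w \<ge> cmod w / 2"
    by (simp add: norm_w norm_mult)
  then have "Re (w + 1 / w) \<ge> cmod w / 2 * (1 + 1 / (cmod w)\<^sup>2)"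
    unfolding Re_add_inverse by (intro mult_right_mono) auto
  also have "cmod w / 2 * (1 + 1 / (cmod w)\<^sup>2) = (cmod w + 1 / cmod w) / 2"
    using \<open>cmod w > 0\<close> by (simp add: field_simps power2_eq_square)
  finally have "a * ((cmod w + 1 / cmod w) / 2) \<le> a * Re (w + 1 / w)"
    using assms(1) by (intro mult_left_mono) auto
  then show ?thesis unfolding norm_joukowski_exp w_def[symmetric] norm_w[symmetric]
    by (simp add: field_simps)
qed

lemma norm_joukowski_exp_ge:
  assumes "a \<ge> 0"
  shows "norm (joukowski_exp a z) \<ge> exp (- (a * (sqrt (cmod z) + 1 / sqrt (cmod z))))"
proof -
  define w where "w = csqrt (\<i> * z)"
  have norm_w: "cmod w = sqrt (cmod z)" by (simp add: w_def norm_mult)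
  have "Re (w + 1 / w) \<le> cmod w + cmod (1 / w)"
    using complex_Re_le_cmod norm_triangle_ineq by (rule order_trans)
  then have "a * Re (w + 1 / w) \<le> a * (cmod w + 1 / cmod w)"
    using assms by (intro mult_left_mono) (auto simp: norm_divide)
  then show ?thesis unfolding norm_joukowski_exp w_def[symmetric] norm_w[symmetric] by simp
qed

lemma norm_higher_deriv_joukowski_exp_le:
  assumes "a \<ge> 0" "s \<noteq> 0"
  shows "norm ((deriv ^^ n) (joukowski_exp a) (of_real s))
           \<le> fact n * exp (- (a / 4 * (sqrt \<bar>s\<bar> + 1 / sqrt \<bar>s\<bar>))) / (\<bar>s\<bar> / 4) ^ n"
proof (rule Cauchy_inequality)
  have sub: "cball (of_real s) (\<bar>s\<bar> / 4) \<subseteq> outside_cone"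
    using assms(2) by (rule cball_subset_outside_cone)
  show "joukowski_exp a holomorphic_on ball (of_real s) (\<bar>s\<bar> / 4)"
    using holomorphic_joukowski_exp sub ball_subset_cball by (blast intro: holomorphic_on_subset)
  show "continuous_on (cball (of_real s) (\<bar>s\<bar> / 4)) (joukowski_exp a)"
    using holomorphic_joukowski_exp sub
    by (blast intro: holomorphic_on_subset holomorphic_on_imp_continuous_on)
  show "0 < \<bar>s\<bar> / 4" using assms(2) by simp
  fix z assume z: "cmod (of_real s - z) = \<bar>s\<bar> / 4"
  then have "z \<in> outside_cone" using sub by (auto simp: dist_norm)
  have "\<bar>s\<bar> / 4 \<le> cmod z" "cmod z \<le> 4 * \<bar>s\<bar>"
    using z norm_triangle_sub[of "of_real s" z] norm_triangle_sub[of z "of_real s"]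
    by (auto simp: norm_minus_commute)
  then have "sqrt (\<bar>s\<bar> / 4) \<le> sqrt (cmod z)" "sqrt (cmod z) \<le> sqrt (4 * \<bar>s\<bar>)"
    by simp_all
  then have "sqrt \<bar>s\<bar> / 2 \<le> sqrt (cmod z)" "sqrt (cmod z) \<le> 2 * sqrt \<bar>s\<bar>"
    by (simp_all add: real_sqrt_divide real_sqrt_mult)
  then have "sqrt \<bar>s\<bar> + 1 / sqrt \<bar>s\<bar> \<le> 2 * (sqrt (cmod z) + 1 / sqrt (cmod z))"
    using outside_cone_nonzero[OF \<open>z \<in> outside_cone\<close>] by (intro add_inverse_le_twice) auto
  then have "a / 4 * (sqrt \<bar>s\<bar> + 1 / sqrt \<bar>s\<bar>)
      \<le> a / 4 * (2 * (sqrt (cmod z) + 1 / sqrt (cmod z)))"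
    using assms(1) by (intro mult_left_mono) auto
  also have "\<dots> = a / 2 * (sqrt (cmod z) + 1 / sqrt (cmod z))" by simp
  finally have "exp (- (a / 2 * (sqrt (cmod z) + 1 / sqrt (cmod z))))
      \<le> exp (- (a / 4 * (sqrt \<bar>s\<bar> + 1 / sqrt \<bar>s\<bar>)))"
    by simp
  then show "norm (joukowski_exp a z) \<le> exp (- (a / 4 * (sqrt \<bar>s\<bar> + 1 / sqrt \<bar>s\<bar>)))"
    using norm_joukowski_exp_le[OF assms(1) \<open>z \<in> outside_cone\<close>] by linarith
qed

(* 0 is the only real point outside outside_cone *)
definition joukowski_exp_derivs :: "real \<Rightarrow> nat \<Rightarrow> real \<Rightarrow> complex" where
  "joukowski_exp_derivs a n s = (if s = 0 then 0 else (deriv ^^ n) (joukowski_exp a) (of_real s))"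

lemma joukowski_exp_derivs_weighted_bound:
  assumes "a > 0"
  shows "\<exists>C. \<forall>s. (\<bar>s\<bar> + 1 / \<bar>s\<bar>) ^ N * norm (joukowski_exp_derivs a n s) \<le> C"
proof -
  obtain K where K: "\<And>t. t > 0 \<Longrightarrow>
      (t + 1 / t) ^ N * (1 / t) ^ n * exp (- (a / 4 * (sqrt t + 1 / sqrt t))) \<le> K"
    using weighted_exp_sqrt_bounded[of "a / 4" N n] assms by auto
  have "0 \<le> K" by (rule order_trans[OF _ K[of 1]]) simp_all
  have "(\<bar>s\<bar> + 1 / \<bar>s\<bar>) ^ N * norm (joukowski_exp_derivs a n s) \<le> fact n * 4 ^ n * K" for s
  proof (cases "s = 0")
    case True
    then show ?thesis using \<open>0 \<le> K\<close> by (simp add: joukowski_exp_derivs_def)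
  next
    case False
    define E where "E = exp (- (a / 4 * (sqrt \<bar>s\<bar> + 1 / sqrt \<bar>s\<bar>)))"
    have "norm (joukowski_exp_derivs a n s) \<le> fact n * E / (\<bar>s\<bar> / 4) ^ n"
      using norm_higher_deriv_joukowski_exp_le[of a s n] assms False
      by (simp add: joukowski_exp_derivs_def E_def)
    also have "\<dots> = fact n * 4 ^ n * ((1 / \<bar>s\<bar>) ^ n * E)"
      by (simp add: field_simps power_divide)
    finally have "(\<bar>s\<bar> + 1 / \<bar>s\<bar>) ^ N * norm (joukowski_exp_derivs a n s)
        \<le> (\<bar>s\<bar> + 1 / \<bar>s\<bar>) ^ N * (fact n * 4 ^ n * ((1 / \<bar>s\<bar>) ^ n * E))"
      by (rule mult_left_mono) simp
    also have "\<dots> = fact n * 4 ^ n * ((\<bar>s\<bar> + 1 / \<bar>s\<bar>) ^ N * (1 / \<bar>s\<bar>) ^ n * E)"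
      by (simp add: mult_ac)
    also have "\<dots> \<le> fact n * 4 ^ n * K"
      using K[of "\<bar>s\<bar>"] False by (simp add: E_def)
    finally show ?thesis .
  qed
  then show ?thesis by blast
qed

lemma joukowski_exp_derivs_has_vector_derivative:
  assumes "a > 0"
  shows "(joukowski_exp_derivs a n has_vector_derivative joukowski_exp_derivs a (Suc n) x) (at x)"
proof (cases "x = 0")
  case False
  have "(deriv ^^ n) (joukowski_exp a) holomorphic_on outside_cone"
    using holomorphic_joukowski_exp open_outside_cone by (rule holomorphic_higher_deriv)
  moreover have "complex_of_real x \<in> outside_cone"
    using False by (intro lower_halfplane_subset_outside_cone) auto
  ultimately have "((deriv ^^ n) (joukowski_exp a) has_field_derivative
      deriv ((deriv ^^ n) (joukowski_exp a)) (of_real x)) (at (of_real x))"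
    using open_outside_cone by (intro holomorphic_derivI)
  then have "((\<lambda>y. (deriv ^^ n) (joukowski_exp a) (of_real y))
      has_vector_derivative joukowski_exp_derivs a (Suc n) x) (at x)"
    using False by (simp add: joukowski_exp_derivs_def has_vector_derivative_real_field)
  then show ?thesis
    by (rule has_vector_derivative_transform_within_open[where S = "- {0}"])
       (auto simp: False joukowski_exp_derivs_def)
next
  case True
  obtain C where "\<And>s. (\<bar>s\<bar> + 1 / \<bar>s\<bar>)\<^sup>2 * norm (joukowski_exp_derivs a n s) \<le> C"
    using joukowski_exp_derivs_weighted_bound[OF assms] by blast
  then have "norm (joukowski_exp_derivs a n s) \<le> C * s\<^sup>2" for s
    by (rule quadratic_bound_if_weighted_bound) (simp add: joukowski_exp_derivs_def)
  then have "(joukowski_exp_derivs a n has_vector_derivative 0) (at 0)"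
    by (rule has_vector_derivative_zero_if_quadratic_bound)
  with True show ?thesis by (simp add: joukowski_exp_derivs_def)
qed

lemma joukowski_exp_derivs_in_S_tilde:
  assumes "a > 0"
  shows "joukowski_exp_derivs a 0 \<in> S_tilde"
proof (rule S_tilde_memI)
  show "derivs_of (joukowski_exp_derivs a 0) (joukowski_exp_derivs a)"
    unfolding derivs_of_def using joukowski_exp_derivs_has_vector_derivative[OF assms] by blast
qed (rule joukowski_exp_derivs_weighted_bound[OF assms])

lemma norm_joukowski_exp_sq_le:
  assumes "a > 0" "z \<in> outside_cone"
  shows "(norm (joukowski_exp a z))\<^sup>2 \<le> (1 + (4 / a) ^ 4) / (1 + (Re z)\<^sup>2)"
proof -
  define r where "r = sqrt (cmod z)"
  have "r > 0" using outside_cone_nonzero[OF assms(2)] by (simp add: r_def)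
  have "norm (joukowski_exp a z) \<le> exp (- (a / 2 * (r + 1 / r)))"
    unfolding r_def using assms by (intro norm_joukowski_exp_le) auto
  also have "\<dots> \<le> exp (- (a / 2 * r))" using \<open>r > 0\<close> assms(1) by simp
  finally have "(norm (joukowski_exp a z))\<^sup>2 \<le> (exp (- (a / 2 * r)))\<^sup>2"
    by (intro power_mono) auto
  also have "\<dots> = exp (- (a * r))" by (simp add: power2_eq_square flip: exp_add)
  finally have norm_sq: "(norm (joukowski_exp a z))\<^sup>2 \<le> exp (- (a * r))" .
  have "(Re z)\<^sup>2 \<le> (cmod z)\<^sup>2" using power_mono[OF abs_Re_le_cmod[of z], of 2] by simp
  also have "(cmod z)\<^sup>2 = (r\<^sup>2)\<^sup>2" by (simp add: r_def)
  also have "\<dots> = r ^ 4" by (simp flip: power_mult)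
  finally have "(1 + (Re z)\<^sup>2) * exp (- (a * r)) \<le> exp (- (a * r)) + r ^ 4 * exp (- (a * r))"
    by (simp add: algebra_simps)
  also have "\<dots> \<le> 1 + (4 / a) ^ 4"
    using \<open>r > 0\<close> assms(1) power_mult_exp_neg_le[of r a 4] by (intro add_mono) auto
  finally have "exp (- (a * r)) \<le> (1 + (4 / a) ^ 4) / (1 + (Re z)\<^sup>2)"
    by (simp add: pos_le_divide_eq add_pos_nonneg mult.commute)
  with norm_sq show ?thesis by linarith
qed

lemma joukowski_exp_in_H2_lower:
  assumes "a > 0"
  shows "joukowski_exp a \<in> H2_lower"
proof (rule H2_lowerI)
  have "{z. Im z < 0} \<subseteq> outside_cone"
    by (auto intro: lower_halfplane_subset_outside_cone)
  then show "joukowski_exp a holomorphic_on {z. Im z < 0}"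
    using holomorphic_joukowski_exp by (rule holomorphic_on_subset[rotated])
  show "(norm (joukowski_exp a z))\<^sup>2 \<le> (1 + (4 / a) ^ 4) / (1 + (Re z)\<^sup>2)" if "Im z < 0" for z
    using assms that by (intro norm_joukowski_exp_sq_le lower_halfplane_subset_outside_cone) auto
qed

lemma joukowski_exp_derivs_in_S_tilde_H2_lower:
  assumes "a > 0"
  shows "joukowski_exp_derivs a 0 \<in> S_tilde_H2_lower"
proof -
  have "isCont (joukowski_exp a) (of_real x)" if "x \<noteq> 0" for x
  proof -
    have "complex_of_real x \<in> outside_cone"
      using that by (intro lower_halfplane_subset_outside_cone) auto
    then show ?thesis
      using holomorphic_joukowski_exp open_outside_cone
      by (meson continuous_on_eq_continuous_at holomorphic_on_imp_continuous_on)
  qed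
  then have "AE x in lborel.
      ((\<lambda>y. joukowski_exp a (Complex x y)) \<longlongrightarrow> joukowski_exp_derivs a 0 x) (at_left 0)"
    by (rule AE_boundary_limit_lower) (auto simp: joukowski_exp_derivs_def)
  then show ?thesis unfolding S_tilde_H2_lower_def
    using joukowski_exp_derivs_in_S_tilde[OF assms] joukowski_exp_in_H2_lower[OF assms] by blast
qed

lemma exp_sqrt_br_neg:
  assumes "s < 0"
  shows "exp (\<i> * sqrt_br s * complex_of_real b) = complex_of_real (exp (b * sqrt (- s)))"
  using assms by (simp add: sqrt_br_def mult_ac flip: exp_of_real)

lemma norm_exp_sqrt_br_mult_joukowski_exp_ge:
  assumes "b > 0" "R \<ge> 1"
  shows "exp (b / 2 * (R - 1))
    \<le> norm (exp (\<i> * sqrt_br (- R\<^sup>2) * complex_of_real b) * joukowski_exp_derivs (b / 2) 0 (- R\<^sup>2))"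
proof -
  have "b / 2 * (1 / R) \<le> b / 2 * 1"
    using assms by (intro mult_left_mono) auto
  then have "b / 2 * (R - 1) \<le> b * R - b / 2 * (R + 1 / R)"
    by (simp only: right_diff_distrib distrib_left)
  then have "exp (b / 2 * (R - 1)) \<le> exp (b * R - b / 2 * (R + 1 / R))"
    by simp
  also have "\<dots> = exp (b * R) * exp (- (b / 2 * (R + 1 / R)))"
    by (simp flip: exp_add)
  also have "\<dots> \<le> exp (b * R) * norm (joukowski_exp (b / 2) (of_real (- R\<^sup>2)))"
    using norm_joukowski_exp_ge[of "b / 2" "of_real (- R\<^sup>2)"] assms
    by (intro mult_left_mono) (simp_all add: norm_power)
  also have "\<dots> = norm (exp (\<i> * sqrt_br (- R\<^sup>2) * complex_of_real b)
      * joukowski_exp_derivs (b / 2) 0 (- R\<^sup>2))"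
    using assms by (simp add: exp_sqrt_br_neg joukowski_exp_derivs_def norm_mult)
  finally show ?thesis .
qed

theorem proposition1:
  fixes b :: real
  assumes "b > 0"
  shows "\<exists>g \<in> S_tilde_H2_lower.
           (\<lambda>s. exp (\<i> * sqrt_br s * complex_of_real b) * g s) \<notin> S_tilde_H2_lower"
proof
  let ?g = "joukowski_exp_derivs (b / 2) 0"
  show "?g \<in> S_tilde_H2_lower"
    using assms by (intro joukowski_exp_derivs_in_S_tilde_H2_lower) simp
  show "(\<lambda>s. exp (\<i> * sqrt_br s * complex_of_real b) * ?g s) \<notin> S_tilde_H2_lower"
  proof
    assume "(\<lambda>s. exp (\<i> * sqrt_br s * complex_of_real b) * ?g s) \<in> S_tilde_H2_lower"
    then have "(\<lambda>s. exp (\<i> * sqrt_br s * complex_of_real b) * ?g s) \<in> S_tilde"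
      by (simp add: S_tilde_H2_lower_def)
    then obtain C where C: "\<And>s. norm (exp (\<i> * sqrt_br s * complex_of_real b) * ?g s) \<le> C"
      by (rule S_tilde_bounded) blast
    define R where "R = 1 + 2 * \<bar>C\<bar> / b"
    have "R \<ge> 1" using assms by (simp add: R_def)
    have "C < 1 + b / 2 * (R - 1)" using assms by (simp add: R_def)
    also have "\<dots> \<le> exp (b / 2 * (R - 1))" by (rule exp_ge_add_one_self)
    also have "\<dots> \<le> norm (exp (\<i> * sqrt_br (- R\<^sup>2) * complex_of_real b) * ?g (- R\<^sup>2))"
      using assms \<open>R \<ge> 1\<close> by (rule norm_exp_sqrt_br_mult_joukowski_exp_ge)
    also have "\<dots> \<le> C" by (rule C)
    finally show False by simp
  qed
qed

end
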